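(* Let $r>0$ and $k\geq 1$ be an integer. Let $\mathcal N=(G,\beta,r)$ be a multi-path network of length $k$: $G=(V,A)$ is a weakly connected directed multigraph without loops with node set $V=\{v_0,v_1,\dots,v_k\}$, in which every arc joins two consecutive nodes $v_{i-1},v_i$ for some $i\in\{1,\dots,k\}$, and $\beta\in\mathbb{R}^A_{>0}$. For $i=1,\dots,k$ let $A_i$ be the set of arcs joining $v_{i-1}$ and $v_i$, and set $u_i:=\sum_{a\in A_i}\mu_a$, where $\mu_a=\beta_a^{-1/r}$. Let $s=v_0$ and $t=v_k$. Then the effective conductance between $s$ and $t$ in $\mathcal N$ is $$U^{\mathcal N}_{s,t}=\Big(\sum_{i=1}^k u_i^{-r}\Big)^{-1/r}.$$
   Context: A potential-based flow network $\mathcal N=(G,\beta,r)$ consists of a weakly connected directed multigraph $G=(V,A)$ without loops, resistances $\beta\in\mathbb{R}^A_{>0}$ and a degree $r>0$; the conductance of arc $a$ is $\mu_a=\beta_a^{-1/r}$. For a balanced vector $b\in\mathbb{R}^V$ (i.e. $\sum_v b_v=0$), a potential-based $b$-transshipment is a pair $(\pi,f)\in\mathbb{R}^V\times\mathbb{R}^A$ with $\pi_u-\pi_v=\beta_a\,\mathrm{sign}(f_a)|f_a|^r$ for every arc $a=(u,v)$ and $\sum_{a\in\delta^+(v)}f_a-\sum_{a\in\delta^-(v)}f_a=b_v$ for all $v\in V$ (here $\delta^+(v)$, $\delta^-(v)$ are the arcs leaving, resp. entering, $v$). Such a pair exists for every balanced $b$ and is unique up to adding a constant to $\pi$; let $\pi^{\mathcal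 N}(b)$ denote the potential vector normalized to have smallest entry $0$. For distinct $s,t\in V$ let $\chi_{s,t}=\chi_s-\chi_t$ (difference of unit vectors). The effective resistance is $R^{\mathcal N}_{s,t}=\pi^{\mathcal N}_s(\chi_{s,t})-\pi^{\mathcal N}_t(\chi_{s,t})$ and the effective conductance is $U^{\mathcal N}_{s,t}=(R^{\mathcal N}_{s,t})^{-1/r}$. *)

theory Defs
  imports Complex_Main
begin

definition weakly_connected :: "'v set \<Rightarrow> 'a set \<Rightarrow> ('a \<Rightarrow> 'v) \<Rightarrow> ('a \<Rightarrow> 'v) \<Rightarrow> bool" where
  "weakly_connected V A tail head \<longleftrightarrow>
     (\<forall>x\<in>V. \<forall>y\<in>V. (x, y) \<in> ({(tail a, head a) | a. a \<in> A} \<union> {(head a, tail a) | a. a \<in> A})\<^sup>*)"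

definition pb_network :: "'v set \<Rightarrow> 'a set \<Rightarrow> ('a \<Rightarrow> 'v) \<Rightarrow> ('a \<Rightarrow> 'v) \<Rightarrow> ('a \<Rightarrow> real) \<Rightarrow> real \<Rightarrow> bool" where
  "pb_network V A tail head \<beta> r \<longleftrightarrow>
     finite V \<and> V \<noteq> {} \<and> finite A \<and>
     (\<forall>a\<in>A. tail a \<in> V \<and> head a \<in> V \<and> tail a \<noteq> head a) \<and>
     weakly_connected V A tail head \<and>
     (\<forall>a\<in>A. \<beta> a > 0) \<and> r > 0"

definition conductance :: "('a \<Rightarrow> real) \<Rightarrow> real \<Rightarrow> 'a \<Rightarrow> real" where
  "conductance \<beta> r a = \<beta> a powr (-1 / r)"

definition is_pbt :: "'v set \<Rightarrow> 'a set \<Rightarrow> ('a \<Rightarrow> 'v) \<Rightarrow> ('a \<Rightarrow> 'v) \<Rightarrow> ('a \<Rightarrow> real) \<Rightarrow> real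
     \<Rightarrow> ('v \<Rightarrow> real) \<Rightarrow> ('v \<Rightarrow> real) \<Rightarrow> ('a \<Rightarrow> real) \<Rightarrow> bool" where
  "is_pbt V A tail head \<beta> r b \<pi> f \<longleftrightarrow>
     (\<forall>a\<in>A. \<pi> (tail a) - \<pi> (head a) = \<beta> a * sgn (f a) * \<bar>f a\<bar> powr r) \<and>
     (\<forall>v\<in>V. (\<Sum>a\<in>{a\<in>A. tail a = v}. f a) - (\<Sum>a\<in>{a\<in>A. head a = v}. f a) = b v)"

definition pot_N :: "'v set \<Rightarrow> 'a set \<Rightarrow> ('a \<Rightarrow> 'v) \<Rightarrow> ('a \<Rightarrow> 'v) \<Rightarrow> ('a \<Rightarrow> real) \<Rightarrow> real
     \<Rightarrow> ('v \<Rightarrow> real) \<Rightarrow> ('v \<Rightarrow> real)" where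
  "pot_N V A tail head \<beta> r b = (THE \<pi>. (\<exists>f. is_pbt V A tail head \<beta> r b \<pi> f) \<and>
       Min (\<pi> ` V) = 0 \<and> (\<forall>x. x \<notin> V \<longrightarrow> \<pi> x = 0))"

definition chi_st :: "'v \<Rightarrow> 'v \<Rightarrow> 'v \<Rightarrow> real" where
  "chi_st s t = (\<lambda>x. (if x = s then 1 else 0) - (if x = t then 1 else 0))"

definition eff_res :: "'v set \<Rightarrow> 'a set \<Rightarrow> ('a \<Rightarrow> 'v) \<Rightarrow> ('a \<Rightarrow> 'v) \<Rightarrow> ('a \<Rightarrow> real) \<Rightarrow> real
     \<Rightarrow> 'v \<Rightarrow> 'v \<Rightarrow> real" where
  "eff_res V A tail head \<beta> r s t =
     pot_N V A tail head \<beta> r (chi_st s t) s - pot_N V A tail head \<beta> r (chi_st s t) t"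

definition eff_cond :: "'v set \<Rightarrow> 'a set \<Rightarrow> ('a \<Rightarrow> 'v) \<Rightarrow> ('a \<Rightarrow> 'v) \<Rightarrow> ('a \<Rightarrow> real) \<Rightarrow> real
     \<Rightarrow> 'v \<Rightarrow> 'v \<Rightarrow> real" where
  "eff_cond V A tail head \<beta> r s t = eff_res V A tail head \<beta> r s t powr (-1 / r)"

end

theory Submission
  imports Defs
begin

text \<open>Every arc of the i-th layer sees the same potential drop d, so the law
  d = \<beta> sgn(f) |f|^r gives it the flow sgn(d) |d|^(1/r) \<mu>, and the layer as a whole carries
  sgn(d) |d|^(1/r) u. Flow conservation at the inner nodes forces every layer to carry one
  unit, hence d = u^(-r), and the effective resistance is the sum of these drops.\<close>

lemma sgn_powr_solve:
  fixes c p d y :: real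
  assumes "c > 0" "p > 0" "d = c * sgn y * \<bar>y\<bar> powr p"
  shows "y = sgn d * \<bar>d\<bar> powr (1 / p) * c powr (-1 / p)"
proof -
  have sgn_d: "sgn d = sgn y"
    using assms by (cases "y = 0") (simp_all add: sgn_mult)
  have "\<bar>d\<bar> powr (1 / p) = c powr (1 / p) * \<bar>y\<bar>"
    using assms by (simp add: abs_mult powr_mult powr_powr)
  moreover have "c powr (1 / p) * c powr (-1 / p) = 1"
    using assms by (simp add: powr_add[symmetric])
  ultimately have "\<bar>d\<bar> powr (1 / p) * c powr (-1 / p) = \<bar>y\<bar>"
    by (metis mult.commute mult.left_neutral mult.assoc)
  then show ?thesis
    using sgn_d by (metis mult.assoc sgn_mult_abs)
qed

lemma sgn_powr_solve_iff:
  fixes c p d y :: real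
  assumes "c > 0" "p > 0"
  shows "d = c * sgn y * \<bar>y\<bar> powr p \<longleftrightarrow> y = sgn d * \<bar>d\<bar> powr (1 / p) * c powr (-1 / p)"
proof
  assume "y = sgn d * \<bar>d\<bar> powr (1 / p) * c powr (-1 / p)"
  then have "y = c powr (-1 / p) * sgn d * \<bar>d\<bar> powr (1 / p)"
    by simp
  \<comment> \<open>the inverse map has the same shape, with c powr (-1/p) and 1/p in place of c and p\<close>
  from sgn_powr_solve[OF _ _ this] show "d = c * sgn y * \<bar>y\<bar> powr p"
    using assms by (simp add: powr_powr)
qed (use assms sgn_powr_solve in blast)

lemma sgn_powr_mult_eq_1_iff:
  fixes d u p :: real
  assumes "u > 0" "p > 0"
  shows "sgn d * \<bar>d\<bar> powr (1 / p) * u = 1 \<longleftrightarrow> d = u powr (- p)"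
proof -
  have "sgn d * \<bar>d\<bar> powr (1 / p) * u = 1 \<longleftrightarrow> 1 / u = sgn d * \<bar>d\<bar> powr (1 / p) * 1 powr (-1 / p)"
    using assms by (auto simp: field_simps)
  also have "\<dots> \<longleftrightarrow> d = 1 * sgn (1 / u) * \<bar>1 / u\<bar> powr p"
    using sgn_powr_solve_iff[of 1 p d "1 / u"] assms by simp
  also have "\<dots> \<longleftrightarrow> d = u powr (- p)"
    using assms by (simp add: powr_minus_divide powr_divide)
  finally show ?thesis .
qed

lemma sum_lessThan_delta_difference:
  fixes g :: "nat \<Rightarrow> 'b::ring_1"
  shows "(\<Sum>i<k. (of_bool (i = j) - of_bool (Suc i = j)) * g i) =
    of_bool (j < k) * g j - of_bool (0 < j \<and> j \<le> k) * g (j - 1)"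
proof -
  have "(\<Sum>i<k. of_bool (i = j) * g i) = of_bool (j < k) * g j"
    by (simp add: of_bool_def if_distrib[of "\<lambda>c. c * _"] cong: if_cong)
  moreover have "(\<Sum>i<k. of_bool (Suc i = j) * g i) = of_bool (0 < j \<and> j \<le> k) * g (j - 1)"
    by (cases j) (simp_all add: of_bool_def if_distrib[of "\<lambda>c. c * _"] cong: if_cong)
  ultimately show ?thesis
    by (simp add: left_diff_distrib sum_subtractf)
qed

lemma weakly_connected_crossing_arc:
  assumes "weakly_connected V A tail head" "x \<in> V" "y \<in> V" "x \<in> S" "y \<notin> S"
  shows "\<exists>a\<in>A. (tail a \<in> S) \<noteq> (head a \<in> S)"
proof (rule ccontr)
  assume no_crossing: "\<not> ?thesis"
  define R where "R = {(tail a, head a) | a. a \<in> A} \<union> {(head a, tail a) | a. a \<in> A}"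
  have "q \<in> S" if "(x, q) \<in> R\<^sup>*" for q
    using that by (induction rule: rtrancl_induct) (use \<open>x \<in> S\<close> no_crossing in \<open>auto simp: R_def\<close>)
  moreover have "(x, y) \<in> R\<^sup>*"
    using assms(1-3) by (simp add: weakly_connected_def R_def)
  ultimately show False
    using \<open>y \<notin> S\<close> by blast
qed

locale multipath_network =
  fixes V :: "'v set" and A :: "'a set" and tail head :: "'a \<Rightarrow> 'v"
    and \<beta> :: "'a \<Rightarrow> real" and r :: real and k :: nat and vs :: "nat \<Rightarrow> 'v"
  assumes network: "pb_network V A tail head \<beta> r"
    and length_pos: "k \<ge> 1"
    and inj_vs: "inj_on vs {0..k}"
    and nodes: "V = vs ` {0..k}"
    and arcs: "\<forall>a\<in>A. \<exists>i\<in>{1..k}. (tail a = vs (i - 1) \<and> head a = vs i) \<or> (tail a = vs i \<and> head a = vs (i - 1))"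
begin

lemma finite_arcs: "finite A"
  and r_pos: "r > 0"
  and resistance_pos: "a \<in> A \<Longrightarrow> \<beta> a > 0"
  and weakly_connected: "weakly_connected V A tail head"
  using network by (simp_all add: pb_network_def)

lemma conductance_pos: "a \<in> A \<Longrightarrow> conductance \<beta> r a > 0"
  using resistance_pos[of a] by (simp add: conductance_def)

lemma vs_eq_iff: "i \<le> k \<Longrightarrow> j \<le> k \<Longrightarrow> vs i = vs j \<longleftrightarrow> i = j"
  using inj_vs by (auto simp: inj_on_eq_iff)

definition layer :: "nat \<Rightarrow> 'a set" where
  "layer i = {a\<in>A. {tail a, head a} = {vs i, vs (Suc i)}}"

lemma layer_subset: "layer i \<subseteq> A"
  by (auto simp: layer_def)

lemma finite_layer: "finite (layer i)"
  using finite_arcs layer_subset by (rule finite_subset[rotated])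

lemma layer_endpoints:
  "a \<in> layer i \<Longrightarrow> (tail a = vs i \<and> head a = vs (Suc i)) \<or> (tail a = vs (Suc i) \<and> head a = vs i)"
  by (auto simp: layer_def doubleton_eq_iff)

lemma arc_in_layer: "a \<in> A \<Longrightarrow> \<exists>i<k. a \<in> layer i"
proof -
  assume "a \<in> A"
  then obtain i where "i \<in> {1..k}"
    and "(tail a = vs (i - 1) \<and> head a = vs i) \<or> (tail a = vs i \<and> head a = vs (i - 1))"
    using arcs by blast
  then show ?thesis
    using \<open>a \<in> A\<close> by (intro exI[of _ "i - 1"]) (auto simp: layer_def)
qed

lemma layer_unique: "a \<in> layer i \<Longrightarrow> a \<in> layer j \<Longrightarrow> i < k \<Longrightarrow> j < k \<Longrightarrow> i = j"
  unfolding layer_def using vs_eq_iff by (auto simp: doubleton_eq_iff)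

lemma sum_arcs_by_layer: "(\<Sum>a\<in>A. g a) = (\<Sum>i<k. \<Sum>a\<in>layer i. g a)"
proof -
  have "A = (\<Union>i<k. layer i)"
    using arc_in_layer layer_subset by blast
  moreover have "(\<Sum>a\<in>(\<Union>i<k. layer i). g a) = (\<Sum>i<k. \<Sum>a\<in>layer i. g a)"
    by (rule sum.UNION_disjoint) (auto simp: finite_layer dest: layer_unique)
  ultimately show ?thesis
    by simp
qed

definition oriented_flow :: "('a \<Rightarrow> real) \<Rightarrow> nat \<Rightarrow> 'a \<Rightarrow> real" where
  "oriented_flow f i a = (if tail a = vs i then f a else - f a)"

definition layer_flow :: "('a \<Rightarrow> real) \<Rightarrow> nat \<Rightarrow> real" where
  "layer_flow f i = (\<Sum>a\<in>layer i. oriented_flow f i a)"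

lemma net_outflow_arc:
  assumes "a \<in> layer i" "i < k" "j \<le> k"
  shows "(if tail a = vs j then f a else 0) - (if head a = vs j then f a else 0) =
    (of_bool (i = j) - of_bool (Suc i = j)) * oriented_flow f i a"
  using layer_endpoints[OF assms(1)] assms(2,3) vs_eq_iff[of i j] vs_eq_iff[of "Suc i" j]
    vs_eq_iff[of "Suc i" i]
  by (auto simp: oriented_flow_def)

lemma net_outflow_vs:
  assumes "j \<le> k"
  shows "(\<Sum>a\<in>{a\<in>A. tail a = vs j}. f a) - (\<Sum>a\<in>{a\<in>A. head a = vs j}. f a) =
    of_bool (j < k) * layer_flow f j - of_bool (0 < j) * layer_flow f (j - 1)"
proof -
  have "(\<Sum>a\<in>{a\<in>A. tail a = vs j}. f a) - (\<Sum>a\<in>{a\<in>A. head a = vs j}. f a) =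
      (\<Sum>a\<in>A. (if tail a = vs j then f a else 0) - (if head a = vs j then f a else 0))"
    using finite_arcs by (simp add: sum.inter_filter sum_subtractf)
  also have "\<dots> = (\<Sum>i<k. \<Sum>a\<in>layer i. (of_bool (i = j) - of_bool (Suc i = j)) * oriented_flow f i a)"
    unfolding sum_arcs_by_layer using assms by (intro sum.cong refl) (simp add: net_outflow_arc)
  also have "\<dots> = (\<Sum>i<k. (of_bool (i = j) - of_bool (Suc i = j)) * layer_flow f i)"
    by (simp add: layer_flow_def sum_distrib_left)
  finally show ?thesis
    using assms by (simp add: sum_lessThan_delta_difference)
qed

lemma chi_st_vs: "j \<le> k \<Longrightarrow> chi_st (vs 0) (vs k) (vs j) = of_bool (j = 0) - of_bool (j = k)"
  using vs_eq_iff[of j 0] vs_eq_iff[of j k] by (simp add: chi_st_def)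

lemma conservation_iff_unit_layer_flows:
  "(\<forall>v\<in>V. (\<Sum>a\<in>{a\<in>A. tail a = v}. f a) - (\<Sum>a\<in>{a\<in>A. head a = v}. f a) = chi_st (vs 0) (vs k) v)
    \<longleftrightarrow> (\<forall>i<k. layer_flow f i = 1)"
proof -
  have "(\<forall>v\<in>V. (\<Sum>a\<in>{a\<in>A. tail a = v}. f a) - (\<Sum>a\<in>{a\<in>A. head a = v}. f a) = chi_st (vs 0) (vs k) v)
    \<longleftrightarrow> (\<forall>j\<in>{0..k}. of_bool (j < k) * layer_flow f j - of_bool (0 < j) * layer_flow f (j - 1) =
                  of_bool (j = 0) - of_bool (j = k))"
    unfolding nodes by (simp add: net_outflow_vs chi_st_vs)
  also have "\<dots> \<longleftrightarrow> (\<forall>i<k. layer_flow f i = 1)"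
  proof
    assume balance: "\<forall>j\<in>{0..k}. of_bool (j < k) * layer_flow f j - of_bool (0 < j) * layer_flow f (j - 1) =
                  of_bool (j = 0) - of_bool (j = k)"
    show "\<forall>i<k. layer_flow f i = 1"
    proof (intro allI impI)
      fix i assume "i < k"
      then show "layer_flow f i = 1"
      proof (induction i)
        case 0
        then show ?case
          using balance[rule_format, of 0] by simp
      next
        case (Suc i)
        then show ?case
          using balance[rule_format, of "Suc i"] by simp
      qed
    qed
  next
    assume "\<forall>i<k. layer_flow f i = 1"
    then show "\<forall>j\<in>{0..k}. of_bool (j < k) * layer_flow f j - of_bool (0 < j) * layer_flow f (j - 1) =
                  of_bool (j = 0) - of_bool (j = k)"
      using length_pos by auto
  qed
  finally show ?thesis .
qed

definition layer_conductance :: "nat \<Rightarrow> real" where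
  "layer_conductance i = (\<Sum>a\<in>layer i. conductance \<beta> r a)"

lemma vs_in_initial_segment_iff: "m \<le> k \<Longrightarrow> j \<le> k \<Longrightarrow> vs m \<in> vs ` {0..j} \<longleftrightarrow> m \<le> j"
  using vs_eq_iff by force

lemma layer_nonempty:
  assumes "j < k"
  shows "layer j \<noteq> {}"
proof -
  obtain a where "a \<in> A" and crossing: "(tail a \<in> vs ` {0..j}) \<noteq> (head a \<in> vs ` {0..j})"
    using weakly_connected_crossing_arc[OF weakly_connected, of "vs 0" "vs k" "vs ` {0..j}"]
      nodes assms vs_in_initial_segment_iff[of k j] by auto
  then obtain i where "i < k" "a \<in> layer i"
    using arc_in_layer by blast
  with crossing have "(vs i \<in> vs ` {0..j}) \<noteq> (vs (Suc i) \<in> vs ` {0..j})"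
    using layer_endpoints[OF \<open>a \<in> layer i\<close>] by metis
  then have "i = j"
    using vs_in_initial_segment_iff[of i j] vs_in_initial_segment_iff[of "Suc i" j]
      \<open>i < k\<close> \<open>j < k\<close> by auto
  with \<open>a \<in> layer i\<close> show ?thesis
    by blast
qed

lemma layer_conductance_pos: "i < k \<Longrightarrow> layer_conductance i > 0"
  unfolding layer_conductance_def
  using finite_layer layer_nonempty layer_subset conductance_pos by (intro sum_pos) blast+

lemma oriented_flow_eq:
  assumes arc_law: "\<forall>a\<in>A. \<pi> (tail a) - \<pi> (head a) = \<beta> a * sgn (f a) * \<bar>f a\<bar> powr r"
    and "a \<in> layer i" "i < k"
  shows "oriented_flow f i a = sgn (\<pi> (vs i) - \<pi> (vs (Suc i))) *
    \<bar>\<pi> (vs i) - \<pi> (vs (Suc i))\<bar> powr (1 / r) * conductance \<beta> r a"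
proof -
  have "a \<in> A"
    using assms(2) layer_subset by blast
  then have "f a = sgn (\<pi> (tail a) - \<pi> (head a)) * \<bar>\<pi> (tail a) - \<pi> (head a)\<bar> powr (1 / r) * conductance \<beta> r a"
    using arc_law sgn_powr_solve_iff[OF resistance_pos r_pos] by (simp add: conductance_def)
  moreover have "vs (Suc i) \<noteq> vs i"
    using vs_eq_iff[of "Suc i" i] \<open>i < k\<close> by simp
  moreover have "sgn (\<pi> (vs (Suc i)) - \<pi> (vs i)) = - sgn (\<pi> (vs i) - \<pi> (vs (Suc i)))"
    by (metis minus_diff_eq sgn_minus)
  ultimately show ?thesis
    using layer_endpoints[OF assms(2)] by (auto simp: oriented_flow_def abs_minus_commute)
qed

definition layer_resistance :: "nat \<Rightarrow> real" where
  "layer_resistance i = layer_conductance i powr (- r)"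

lemma unit_layer_flow_iff:
  assumes arc_law: "\<forall>a\<in>A. \<pi> (tail a) - \<pi> (head a) = \<beta> a * sgn (f a) * \<bar>f a\<bar> powr r"
    and "i < k"
  shows "layer_flow f i = 1 \<longleftrightarrow> \<pi> (vs i) - \<pi> (vs (Suc i)) = layer_resistance i"
proof -
  have "layer_flow f i = sgn (\<pi> (vs i) - \<pi> (vs (Suc i))) *
      \<bar>\<pi> (vs i) - \<pi> (vs (Suc i))\<bar> powr (1 / r) * layer_conductance i"
    unfolding layer_flow_def layer_conductance_def sum_distrib_left
    using oriented_flow_eq[OF arc_law _ \<open>i < k\<close>] by simp
  then show ?thesis
    using sgn_powr_mult_eq_1_iff[OF layer_conductance_pos[OF \<open>i < k\<close>] r_pos]
    by (simp add: layer_resistance_def)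
qed

lemma is_pbt_iff_layer_drops:
  "is_pbt V A tail head \<beta> r (chi_st (vs 0) (vs k)) \<pi> f \<longleftrightarrow>
    (\<forall>a\<in>A. \<pi> (tail a) - \<pi> (head a) = \<beta> a * sgn (f a) * \<bar>f a\<bar> powr r) \<and>
    (\<forall>i<k. \<pi> (vs i) - \<pi> (vs (Suc i)) = layer_resistance i)"
  unfolding is_pbt_def conservation_iff_unit_layer_flows using unit_layer_flow_iff by blast

definition series_resistance :: "nat \<Rightarrow> real" where
  "series_resistance j = (\<Sum>i\<in>{j..<k}. layer_resistance i)"

lemma series_resistance_nonneg: "series_resistance j \<ge> 0"
  unfolding series_resistance_def layer_resistance_def by (intro sum_nonneg) simp

lemma series_resistance_drop: "j < k \<Longrightarrow> series_resistance j - series_resistance (Suc j) = layer_resistance j"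
  by (simp add: series_resistance_def sum.atLeast_Suc_lessThan)

definition series_potential :: "'v \<Rightarrow> real" where
  "series_potential x = (if x \<in> V then series_resistance (inv_into {0..k} vs x) else 0)"

lemma series_potential_vs: "j \<le> k \<Longrightarrow> series_potential (vs j) = series_resistance j"
proof -
  assume "j \<le> k"
  then have "vs j \<in> V"
    using nodes by simp
  with \<open>j \<le> k\<close> show ?thesis
    by (simp add: series_potential_def inv_into_f_f inj_vs)
qed

definition series_flow :: "'a \<Rightarrow> real" where
  "series_flow a = (let d = series_potential (tail a) - series_potential (head a)
     in sgn d * \<bar>d\<bar> powr (1 / r) * conductance \<beta> r a)"

lemma is_pbt_series_potential:
  "is_pbt V A tail head \<beta> r (chi_st (vs 0) (vs k)) series_potential series_flow"
  unfolding is_pbt_iff_layer_drops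
  using sgn_powr_solve_iff[OF resistance_pos r_pos] series_resistance_drop
  by (simp add: series_flow_def conductance_def series_potential_vs Let_def)

lemma potential_vs_eq:
  assumes drops: "\<forall>i<k. \<pi> (vs i) - \<pi> (vs (Suc i)) = layer_resistance i" and "j \<le> k"
  shows "\<pi> (vs j) = \<pi> (vs k) + series_resistance j"
  using \<open>j \<le> k\<close>
proof (induction rule: inc_induct)
  case base
  then show ?case
    by (simp add: series_resistance_def)
next
  case (step j)
  then show ?case
    using drops series_resistance_drop[of j] by force
qed

lemma Min_potential_eq:
  assumes drops: "\<forall>i<k. \<pi> (vs i) - \<pi> (vs (Suc i)) = layer_resistance i"
  shows "Min (\<pi> ` V) = \<pi> (vs k)"
proof -
  have "\<pi> (vs k) \<le> \<pi> (vs j)" if "j \<le> k" for j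
    using potential_vs_eq[OF drops that] series_resistance_nonneg[of j] by linarith
  then show ?thesis
    unfolding nodes by (intro Min_eqI) auto
qed

lemma pot_N_eq_series_potential:
  "pot_N V A tail head \<beta> r (chi_st (vs 0) (vs k)) = series_potential"
  unfolding pot_N_def
proof (rule the_equality)
  have "\<forall>i<k. series_potential (vs i) - series_potential (vs (Suc i)) = layer_resistance i"
    using is_pbt_series_potential is_pbt_iff_layer_drops by blast
  then have "Min (series_potential ` V) = 0"
    by (simp add: Min_potential_eq series_potential_vs series_resistance_def)
  then show "(\<exists>f. is_pbt V A tail head \<beta> r (chi_st (vs 0) (vs k)) series_potential f) \<and>
      Min (series_potential ` V) = 0 \<and> (\<forall>x. x \<notin> V \<longrightarrow> series_potential x = 0)"
    using is_pbt_series_potential by (auto simp: series_potential_def)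
next
  fix \<pi>
  assume "(\<exists>f. is_pbt V A tail head \<beta> r (chi_st (vs 0) (vs k)) \<pi> f) \<and>
      Min (\<pi> ` V) = 0 \<and> (\<forall>x. x \<notin> V \<longrightarrow> \<pi> x = 0)"
  then have drops: "\<forall>i<k. \<pi> (vs i) - \<pi> (vs (Suc i)) = layer_resistance i"
    and "\<pi> (vs k) = 0" and outside: "\<forall>x. x \<notin> V \<longrightarrow> \<pi> x = 0"
    using Min_potential_eq by (auto simp: is_pbt_iff_layer_drops)
  show "\<pi> = series_potential"
  proof
    fix x
    show "\<pi> x = series_potential x"
    proof (cases "x \<in> V")
      case True
      with nodes obtain j where "j \<le> k" "x = vs j"
        by auto
      then show ?thesis
        using potential_vs_eq[OF drops] series_potential_vs \<open>\<pi> (vs k) = 0\<close> by simp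
    next
      case False
      with outside show ?thesis
        by (simp add: series_potential_def)
    qed
  qed
qed

lemma eff_res_eq: "eff_res V A tail head \<beta> r (vs 0) (vs k) = (\<Sum>i<k. layer_conductance i powr (- r))"
  by (simp add: eff_res_def pot_N_eq_series_potential series_potential_vs series_resistance_def
      layer_resistance_def atLeast0LessThan)

end

theorem lemma2:
  fixes V :: "'v set" and A :: "'a set" and tail head :: "'a \<Rightarrow> 'v"
    and \<beta> :: "'a \<Rightarrow> real" and r :: real and k :: nat and vs :: "nat \<Rightarrow> 'v"
  assumes "pb_network V A tail head \<beta> r"
    and "k \<ge> 1"
    and "inj_on vs {0..k}"
    and "V = vs ` {0..k}"
    and "\<forall>a\<in>A. \<exists>i\<in>{1..k}. (tail a = vs (i - 1) \<and> head a = vs i) \<or> (tail a = vs i \<and> head a = vs (i - 1))"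
  shows "eff_cond V A tail head \<beta> r (vs 0) (vs k) =
    (\<Sum>i=1..k. (\<Sum>a\<in>{a\<in>A. {tail a, head a} = {vs (i - 1), vs i}}. conductance \<beta> r a) powr (- r)) powr (-1 / r)"
proof -
  interpret multipath_network V A tail head \<beta> r k vs
    using assms by unfold_locales
  have "(\<Sum>i=1..k. (\<Sum>a\<in>{a\<in>A. {tail a, head a} = {vs (i - 1), vs i}}. conductance \<beta> r a) powr (- r))
      = (\<Sum>i<k. layer_conductance i powr (- r))"
    by (simp add: sum.atLeast1_atMost_eq layer_conductance_def layer_def)
  then show ?thesis
    by (simp add: eff_cond_def eff_res_eq)
qed

end
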